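(* For every positive integer $k$, as formal power series in $q$, $$\sum_{n\ge1}\mathrm{spt}k'_{do}(n)\,q^n=T_k(q)\,(q;q^2)_\infty+2q^k(q^2;q^2)_{k-1},$$ where $T_1(q)=-q$ and $T_k(q)=(q-q^{2k-1})T_{k-1}(q)-q^{2k-1}$ for $k>1$.
   Context: For a partition $\pi$, $s(\pi)$ is its smallest part. $\mathrm{Spt}k_{do}(n)$ is the set of partitions $\pi$ of $n$ in which $s(\pi)$ occurs exactly $k$ times and the remaining parts (those larger than $s(\pi)$) are pairwise distinct and each has parity different from that of $s(\pi)$. $B_0(k,n)$ (resp. $B_1(k,n)$) is the number of $\pi\in\mathrm{Spt}k_{do}(n)$ whose number of parts greater than $s(\pi)$ is even (resp. odd), and $\mathrm{spt}k'_{do}(n)=B_0(k,n)-B_1(k,n)$. Notation: $(a;q)_0=1$, $(a;q)_n=\prod_{j=0}^{n-1}(1-aq^j)$, $(a;q)_\infty=\prod_{j\ge0}(1-aq^j)$. *)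

theory Defs
  imports "HOL-Library.Multiset" "HOL-Computational_Algebra.Formal_Power_Series"
begin

definition smallest_part :: "nat multiset \<Rightarrow> nat" where
  "smallest_part p = Min (set_mset p)"

definition is_partition :: "nat \<Rightarrow> nat multiset \<Rightarrow> bool" where
  "is_partition n p \<longleftrightarrow> (\<forall>x\<in>#p. 0 < x) \<and> sum_mset p = n"

definition Spt_do :: "nat \<Rightarrow> nat \<Rightarrow> nat multiset set" where
  "Spt_do k n = {p. is_partition n p \<and> p \<noteq> {#} \<and>
      count p (smallest_part p) = k \<and>
      (\<forall>x\<in>#p. smallest_part p < x \<longrightarrow>
          count p x = 1 \<and> odd (x + smallest_part p))}"

definition num_larger :: "nat multiset \<Rightarrow> nat" where
  "num_larger p = size (filter_mset (\<lambda>x. smallest_part p < x) p)"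

definition B0 :: "nat \<Rightarrow> nat \<Rightarrow> nat" where
  "B0 k n = card {p \<in> Spt_do k n. even (num_larger p)}"

definition B1 :: "nat \<Rightarrow> nat \<Rightarrow> nat" where
  "B1 k n = card {p \<in> Spt_do k n. odd (num_larger p)}"

definition sptk'_do :: "nat \<Rightarrow> nat \<Rightarrow> int" where
  "sptk'_do k n = int (B0 k n) - int (B1 k n)"

text \<open>(q;q^2)_\<infinity> as a formal power series: the coefficient of q^n is taken from the
  finite product over j \<le> n, which already agrees with all longer partial products
  in degree n (all further factors are 1 + O(q^{n+1})).\<close>
definition qq2_inf :: "int fps" where
  "qq2_inf = Abs_fps (\<lambda>n. fps_nth (\<Prod>j<Suc n. (1 - fps_X ^ (2*j+1))) n)"

definition q2q2_fin :: "nat \<Rightarrow> int fps" where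
  "q2q2_fin m = (\<Prod>j<m. (1 - fps_X ^ (2*j+2)))"

fun T :: "nat \<Rightarrow> int fps" where
  "T 0 = 0"
| "T (Suc 0) = - fps_X"
| "T (Suc (Suc k)) = (fps_X - fps_X ^ (2*(k+2)-1)) * T (Suc k) - fps_X ^ (2*(k+2)-1)"

end

theory Submission
  imports Defs
begin

text \<open>
  Encode a partition in Spt_do k n by its smallest part s and the set A of its larger parts.
  Counted with sign (-1)^|A|, spt'_k(n) becomes the coefficient of q^n in
  S_k = sum_{s >= 1} q^(k s) P_s, where P_s is the product of the factors 1 - q^j over the
  j > s of parity opposite to s. Since P_s = (1 - q^(s+1)) P_(s+2), the series
  S_(k+1) - (q - q^(2k+1)) S_k telescopes to -q^(2k+1) P_0 for k >= 1 and to 2q - q P_0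
  for k = 0. As P_0 = (q;q^2)_inf, induction on k gives the formula. The identities are
  proved for truncated products, which agree with the infinite ones modulo q^(N+1).
\<close>

unbundle fps_syntax

definition opp_parity_parts :: "nat \<Rightarrow> nat \<Rightarrow> nat set" where
  "opp_parity_parts M s = {j. s < j \<and> j \<le> M \<and> odd (j + s)}"

definition opp_parity_prod :: "nat \<Rightarrow> nat \<Rightarrow> int fps" where
  "opp_parity_prod M s = (\<Prod>j\<in>opp_parity_parts M s. 1 - fps_X ^ j)"

text \<open>spt_gf M k N is S_k truncated to s <= N and to factors 1 - q^j with j <= M.\<close>

definition spt_gf :: "nat \<Rightarrow> nat \<Rightarrow> nat \<Rightarrow> int fps" where
  "spt_gf M k N = (\<Sum>s=1..N. fps_X ^ (k * s) * opp_parity_prod M s)"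

lemma finite_opp_parity_parts [simp]: "finite (opp_parity_parts M s)"
  unfolding opp_parity_parts_def by (rule finite_subset[of _ "{..M}"]) auto

section \<open>Signed count of Spt_do as a coefficient\<close>

lemma prod_one_minus_fps_X_power_nth:
  assumes "finite J"
  shows "(\<Prod>j\<in>J. 1 - fps_X ^ j :: 'a::comm_ring_1 fps) $ m
           = (\<Sum>A | A \<subseteq> J \<and> \<Sum>A = m. (-1) ^ card A)"
proof -
  have neg_one_power: "(- 1 :: 'a fps) ^ c = fps_const ((- 1) ^ c)" for c
    by (induction c) (simp_all flip: fps_const_neg fps_const_mult)
  have "(\<Prod>j\<in>J. 1 - fps_X ^ j :: 'a fps) = (\<Sum>A\<in>Pow J. fps_X ^ (\<Sum>A) * fps_const ((-1) ^ card A))"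
    unfolding prod_diff_conv_sum[OF assms]
    by (intro sum.cong refl) (simp add: neg_one_power mult_ac flip: power_sum)
  then have "(\<Prod>j\<in>J. 1 - fps_X ^ j :: 'a fps) $ m = (\<Sum>A\<in>Pow J. if \<Sum>A = m then (-1) ^ card A else 0)"
    by (auto simp: fps_sum_nth fps_X_power_mult_nth intro!: sum.cong)
  also have "\<dots> = (\<Sum>A\<in>{A\<in>Pow J. \<Sum>A = m}. (-1) ^ card A)"
    by (rule sum.inter_filter[symmetric]) (simp add: assms)
  also have "{A\<in>Pow J. \<Sum>A = m} = {A. A \<subseteq> J \<and> \<Sum>A = m}"
    by auto
  finally show ?thesis .
qed

definition spt_data :: "nat \<Rightarrow> nat \<Rightarrow> (nat \<times> nat set) set" where
  "spt_data k n = (SIGMA s:{1..n}. {A. A \<subseteq> opp_parity_parts (n + 1) s \<and> k * s + \<Sum>A = n})"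

lemma finite_spt_data: "finite (spt_data k n)"
  unfolding spt_data_def by simp

lemma spt_gf_nth: "spt_gf (n + 1) k n $ n = (\<Sum>(s, A)\<in>spt_data k n. (-1) ^ card A)"
proof -
  have "(fps_X ^ (k * s) * opp_parity_prod (n + 1) s) $ n
        = (\<Sum>A | A \<subseteq> opp_parity_parts (n + 1) s \<and> k * s + \<Sum>A = n. (-1) ^ card A)" for s
  proof (cases "n < k * s")
    case True
    then have "{A. A \<subseteq> opp_parity_parts (n + 1) s \<and> k * s + \<Sum>A = n} = {}"
      by auto
    then show ?thesis
      using True by (simp add: fps_X_power_mult_nth)
  next
    case False
    then have "{A. A \<subseteq> opp_parity_parts (n + 1) s \<and> k * s + \<Sum>A = n}
               = {A. A \<subseteq> opp_parity_parts (n + 1) s \<and> \<Sum>A = n - k * s}"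
      by (intro Collect_cong) linarith
    then show ?thesis
      using False by (simp add: fps_X_power_mult_nth opp_parity_prod_def prod_one_minus_fps_X_power_nth)
  qed
  then have "spt_gf (n + 1) k n $ n
             = (\<Sum>s=1..n. \<Sum>A | A \<subseteq> opp_parity_parts (n + 1) s \<and> k * s + \<Sum>A = n. (-1) ^ card A)"
    unfolding spt_gf_def by (simp add: fps_sum_nth)
  also have "\<dots> = (\<Sum>(s, A)\<in>spt_data k n. (-1) ^ card A)"
    unfolding spt_data_def
    by (rule sum.Sigma) simp_all
  finally show ?thesis .
qed

definition spt_of :: "nat \<Rightarrow> nat \<times> nat set \<Rightarrow> nat multiset" where
  "spt_of k = (\<lambda>(s, A). replicate_mset k s + mset_set A)"

lemma count_spt_of:
  "finite A \<Longrightarrow> count (spt_of k (s, A)) x = (if x = s then k else 0) + (if x \<in> A then 1 else 0)"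
  unfolding spt_of_def by simp

lemma sum_mset_spt_of: "finite A \<Longrightarrow> sum_mset (spt_of k (s, A)) = k * s + \<Sum>A"
  unfolding spt_of_def by (simp add: sum_unfold_sum_mset)

context
  fixes k s :: nat and A :: "nat set"
  assumes k: "1 \<le> k" and A: "finite A" "\<forall>x\<in>A. s < x"
begin

lemma set_mset_spt_of: "set_mset (spt_of k (s, A)) = insert s A"
  using k A unfolding spt_of_def by auto

lemma smallest_part_spt_of: "smallest_part (spt_of k (s, A)) = s"
  unfolding smallest_part_def set_mset_spt_of by (rule Min_eqI) (use A in auto)

lemma num_larger_spt_of: "num_larger (spt_of k (s, A)) = card A"
proof -
  have replicate: "filter_mset (\<lambda>x. s < x) (replicate_mset j s) = {#}" for j
    by (induction j) simp_all
  have "{x \<in> A. s < x} = A"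
    using A by auto
  then have "filter_mset (\<lambda>x. s < x) (spt_of k (s, A)) = mset_set A"
    unfolding spt_of_def prod.case filter_union_mset replicate filter_mset_mset_set[OF A(1)] by simp
  then show ?thesis
    unfolding num_larger_def smallest_part_spt_of by simp
qed

end

lemma opp_parity_parts_subsetD:
  assumes "A \<subseteq> opp_parity_parts M s"
  shows "finite A" and "\<forall>x\<in>A. s < x"
  using assms finite_subset[OF assms] by (auto simp: opp_parity_parts_def)

lemma spt_of_in_Spt_do:
  assumes k: "1 \<le> k" and sA: "(s, A) \<in> spt_data k n"
  shows "spt_of k (s, A) \<in> Spt_do k n"
proof -
  from sA have s: "1 \<le> s" and A: "A \<subseteq> opp_parity_parts (n + 1) s" and sum: "k * s + \<Sum>A = n"
    unfolding spt_data_def by auto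
  note A_props = opp_parity_parts_subsetD[OF A]
  note facts = set_mset_spt_of[OF k A_props] smallest_part_spt_of[OF k A_props]
    count_spt_of[OF A_props(1)] sum_mset_spt_of[OF A_props(1)]
  have "is_partition n (spt_of k (s, A))"
    using s A_props sum unfolding is_partition_def facts by auto
  moreover have "odd (x + s)" if "x \<in> A" for x
    using A that unfolding opp_parity_parts_def by auto
  moreover have "spt_of k (s, A) \<noteq> {#}"
    using facts(1) by force
  ultimately show ?thesis
    unfolding Spt_do_def using A_props by (auto simp: facts)
qed

lemma Spt_do_subset_image_spt_of:
  assumes k: "1 \<le> k"
  shows "Spt_do k n \<subseteq> spt_of k ` spt_data k n"
proof
  fix p
  assume "p \<in> Spt_do k n"
  then have part: "is_partition n p" and ne: "p \<noteq> {#}" and count_s: "count p (smallest_part p) = k"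
    and larger: "\<forall>x\<in>#p. smallest_part p < x \<longrightarrow> count p x = 1 \<and> odd (x + smallest_part p)"
    unfolding Spt_do_def by auto
  define s where "s = smallest_part p"
  define A where "A = {x \<in> set_mset p. s < x}"
  have s_in: "s \<in># p" and s_le: "\<And>x. x \<in># p \<Longrightarrow> s \<le> x"
    using ne unfolding s_def smallest_part_def by (simp_all add: Min_in)
  have A_props: "finite A" "\<forall>x\<in>A. s < x"
    unfolding A_def by auto
  have p_eq: "p = spt_of k (s, A)"
  proof (rule multiset_eqI)
    fix x
    have "count (spt_of k (s, A)) x = (if x = s then k else 0) + (if x \<in> A then 1 else 0)"
      by (rule count_spt_of[OF A_props(1)])
    then show "count p x = count (spt_of k (s, A)) x"
      using count_s larger s_le[of x] unfolding A_def s_def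
      by (cases "x \<in># p") (auto simp: not_in_iff)
  qed
  have sum: "k * s + \<Sum>A = n"
    using part unfolding is_partition_def p_eq sum_mset_spt_of[OF A_props(1)] by simp
  have parts_le: "x \<le> n" if "x \<in> A" for x
    using that part sum_mset.remove[of x p] unfolding A_def is_partition_def by auto
  have "1 \<le> s"
    using part s_in unfolding is_partition_def by auto
  moreover have "s \<le> n"
    using sum k by (metis le_add1 le_trans mult_le_mono1 mult_1)
  moreover have "A \<subseteq> opp_parity_parts (n + 1) s"
    using parts_le larger unfolding A_def s_def opp_parity_parts_def by (auto intro: le_SucI)
  ultimately have "(s, A) \<in> spt_data k n"
    unfolding spt_data_def using sum by simp
  then show "p \<in> spt_of k ` spt_data k n"
    using p_eq by blast
qed

lemma inj_on_spt_of:
  assumes k: "1 \<le> k"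
  shows "inj_on (spt_of k) (spt_data k n)"
proof (rule inj_onI, clarify)
  fix s A t B
  assume "(s, A) \<in> spt_data k n" "(t, B) \<in> spt_data k n" and eq: "spt_of k (s, A) = spt_of k (t, B)"
  then have A_props: "finite A" "\<forall>x\<in>A. s < x" and B_props: "finite B" "\<forall>x\<in>B. t < x"
    unfolding spt_data_def using opp_parity_parts_subsetD by auto
  have "s = t"
    using eq smallest_part_spt_of[OF k A_props] smallest_part_spt_of[OF k B_props] by metis
  moreover have "A = B"
    using eq set_mset_spt_of[OF k A_props] set_mset_spt_of[OF k B_props] A_props B_props \<open>s = t\<close>
    by (metis Diff_insert_absorb less_irrefl)
  ultimately show "s = t \<and> A = B" ..
qed

lemma bij_betw_spt_of: "1 \<le> k \<Longrightarrow> bij_betw (spt_of k) (spt_data k n) (Spt_do k n)"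
  unfolding bij_betw_def
  using inj_on_spt_of Spt_do_subset_image_spt_of spt_of_in_Spt_do by fast

lemma sum_neg_one_power_eq_card_even_minus_card_odd:
  assumes "finite S"
  shows "(\<Sum>x\<in>S. (-1::int) ^ f x) = int (card {x\<in>S. even (f x)}) - int (card {x\<in>S. odd (f x)})"
proof -
  have "(\<Sum>x\<in>S. (-1::int) ^ f x) = (\<Sum>x\<in>S. if even (f x) then 1 else -1)"
    by (intro sum.cong) auto
  also have "\<dots> = int (card {x\<in>S. even (f x)}) - int (card {x\<in>S. odd (f x)})"
    using assms by (simp add: sum.If_cases Int_def conj_commute)
  finally show ?thesis .
qed

lemma sptk'_do_eq_spt_gf_nth:
  assumes "1 \<le> k"
  shows "sptk'_do k n = spt_gf (n + 1) k n $ n"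
proof -
  have bij: "bij_betw (spt_of k) (spt_data k n) (Spt_do k n)"
    using bij_betw_spt_of[OF assms] .
  then have "finite (Spt_do k n)"
    using finite_spt_data bij_betw_finite by blast
  then have "sptk'_do k n = (\<Sum>p\<in>Spt_do k n. (-1) ^ num_larger p)"
    unfolding sptk'_do_def B0_def B1_def by (simp add: sum_neg_one_power_eq_card_even_minus_card_odd)
  also have "\<dots> = (\<Sum>d\<in>spt_data k n. (-1) ^ num_larger (spt_of k d))"
    by (rule sum.reindex_bij_betw[OF bij, symmetric])
  also have "\<dots> = spt_gf (n + 1) k n $ n"
    unfolding spt_gf_nth
  proof (intro sum.cong refl, clarify)
    fix s A
    assume "(s, A) \<in> spt_data k n"
    then have "A \<subseteq> opp_parity_parts (n + 1) s"
      unfolding spt_data_def by auto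
    then show "(-1) ^ num_larger (spt_of k (s, A)) = (-1) ^ card A"
      by (simp add: num_larger_spt_of[OF assms opp_parity_parts_subsetD])
  qed
  finally show ?thesis .
qed

section \<open>The recurrence in k\<close>

lemma opp_parity_prod_step:
  assumes "s < M"
  shows "opp_parity_prod M s = (1 - fps_X ^ (s + 1)) * opp_parity_prod M (s + 2)"
proof -
  have "opp_parity_parts M s = insert (s + 1) (opp_parity_parts M (s + 2))"
    using assms unfolding opp_parity_parts_def by auto presburger+
  moreover have "s + 1 \<notin> opp_parity_parts M (s + 2)"
    unfolding opp_parity_parts_def by simp
  ultimately show ?thesis
    unfolding opp_parity_prod_def by simp
qed

lemma opp_parity_prod_eq_1: "M \<le> s \<Longrightarrow> opp_parity_prod M s = 1"
proof -
  assume "M \<le> s"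
  then have "opp_parity_parts M s = {}"
    unfolding opp_parity_parts_def by auto
  then show ?thesis
    unfolding opp_parity_prod_def by simp
qed

lemma sum_telescope_step2:
  fixes b :: "nat \<Rightarrow> 'a::ab_group_add"
  shows "(\<Sum>s=1..N. b s - b (s + 2)) = b 1 + b 2 - b (N + 1) - b (N + 2)"
  by (induction N) (simp_all add: algebra_simps numeral_2_eq_2)

lemma spt_gf_recurrence:
  fixes k M N :: nat
  assumes "N < M"
  defines "b \<equiv> \<lambda>s. (fps_X ^ s - fps_X) * fps_X ^ (k * s) * opp_parity_prod M s"
  shows "spt_gf M (k + 1) N
           = (fps_X - fps_X ^ (2 * k + 1)) * spt_gf M k N - fps_X ^ (2 * k + 1) * opp_parity_prod M 0
             - b (N + 1) - b (N + 2)"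
proof -
  have step: "fps_X ^ ((k + 1) * s) * opp_parity_prod M s
                - (fps_X - fps_X ^ (2 * k + 1)) * (fps_X ^ (k * s) * opp_parity_prod M s)
              = b s - b (s + 2)" if "s \<le> N" for s
  proof -
    define u v w :: "int fps" where "u = fps_X ^ s" and "v = fps_X ^ (k * s)" and "w = fps_X ^ k"
    have powers: "fps_X ^ ((k + 1) * s) = v * u" "fps_X ^ (2 * k + 1) = w\<^sup>2 * fps_X"
      "fps_X ^ (k * (s + 2)) = v * w\<^sup>2" "fps_X ^ (s + 2) = u * fps_X\<^sup>2" "fps_X ^ (s + 1) = u * fps_X"
      unfolding u_def v_def w_def
      by (simp_all add: power_add power_mult_distrib mult_ac power2_eq_square mult_2_right flip: power_mult)
    have P_step: "opp_parity_prod M s = (1 - u * fps_X) * opp_parity_prod M (s + 2)"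
      using that assms(1) by (simp add: opp_parity_prod_step powers u_def)
    show ?thesis
      unfolding b_def powers u_def[symmetric] v_def[symmetric] P_step
      by (simp add: algebra_simps power2_eq_square)
  qed
  have "b 2 = - (fps_X ^ (2 * k + 1) * opp_parity_prod M 0)"
  proof -
    have P_step: "opp_parity_prod M 0 = (1 - fps_X) * opp_parity_prod M 2"
      using assms(1) opp_parity_prod_step[of 0 M] by (simp add: numeral_2_eq_2)
    have "fps_X ^ (2 * k + 1) = fps_X ^ (k * 2) * (fps_X :: int fps)"
      by (simp add: mult.commute)
    then show ?thesis
      unfolding b_def P_step by (simp add: algebra_simps power2_eq_square)
  qed
  moreover have "b 1 = 0"
    unfolding b_def by simp
  moreover have "spt_gf M (k + 1) N - (fps_X - fps_X ^ (2 * k + 1)) * spt_gf M k N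
                 = (\<Sum>s=1..N. b s - b (s + 2))"
    unfolding spt_gf_def sum_distrib_left sum_subtractf[symmetric]
    using step by (intro sum.cong) auto
  ultimately show ?thesis
    unfolding sum_telescope_step2 by (simp add: algebra_simps)
qed

lemma spt_gf_one:
  "spt_gf (N + 1) 1 N
     = 2 * fps_X - fps_X * opp_parity_prod (N + 1) 0 - fps_X ^ (N + 1) * (1 + fps_X)"
  using spt_gf_recurrence[of N "N + 1" 0] by (simp add: opp_parity_prod_eq_1 algebra_simps)

lemma spt_gf_recurrence_mod:
  assumes "1 \<le> k"
  shows "fps_X ^ (N + 1) dvd spt_gf (N + 1) (k + 1) N
           - ((fps_X - fps_X ^ (2 * k + 1)) * spt_gf (N + 1) k N
              - fps_X ^ (2 * k + 1) * opp_parity_prod (N + 1) 0)"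
proof -
  define B :: "nat \<Rightarrow> int fps" where "B j = (fps_X ^ j - fps_X) * fps_X ^ (k * j)" for j
  have "spt_gf (N + 1) (k + 1) N
          - ((fps_X - fps_X ^ (2 * k + 1)) * spt_gf (N + 1) k N
             - fps_X ^ (2 * k + 1) * opp_parity_prod (N + 1) 0)
        = - (B (N + 1) + B (N + 2))"
    using spt_gf_recurrence[of N "N + 1" k] by (simp add: B_def opp_parity_prod_eq_1)
  moreover have "fps_X ^ (N + 1) dvd B j" if "N + 1 \<le> j" for j
    unfolding B_def using assms that
    by (intro dvd_mult le_imp_power_dvd) (simp add: order_trans[OF _ mult_le_mono1[of 1 k]])
  ultimately show ?thesis
    by simp
qed

lemma T_Suc: "1 \<le> k \<Longrightarrow> T (Suc k) = (fps_X - fps_X ^ (2 * k + 1)) * T k - fps_X ^ (2 * k + 1)"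
  by (cases k rule: T.cases) simp_all

lemma q2q2_fin_Suc: "q2q2_fin (Suc m) = q2q2_fin m * (1 - fps_X ^ (2 * m + 2))"
  by (simp add: q2q2_fin_def)

lemma spt_gf_congruence:
  assumes "1 \<le> k"
  shows "fps_X ^ (N + 1) dvd spt_gf (N + 1) k N
           - (T k * opp_parity_prod (N + 1) 0 + 2 * fps_X ^ k * q2q2_fin (k - 1))"
  using assms
proof (induction k rule: nat_induct_at_least)
  case base
  have "spt_gf (N + 1) 1 N - (T 1 * opp_parity_prod (N + 1) 0 + 2 * fps_X ^ 1 * q2q2_fin (1 - 1))
        = - (fps_X ^ (N + 1) * (1 + fps_X))"
    unfolding spt_gf_one by (simp add: q2q2_fin_def)
  then show ?case
    unfolding dvd_minus_iff by simp
next
  case (Suc k)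
  let ?P = "opp_parity_prod (N + 1) 0"
  let ?c = "fps_X - fps_X ^ (2 * k + 1) :: int fps"
  define Y :: "int fps" where "Y = fps_X ^ k"
  have powers: "fps_X ^ (2 * k) = Y\<^sup>2" "fps_X ^ (2 * k + 1) = fps_X * Y\<^sup>2" "fps_X ^ Suc k = fps_X * Y"
    unfolding Y_def by (simp_all flip: power_mult power_Suc)
  have q2_step: "q2q2_fin k = q2q2_fin (k - 1) * (1 - fps_X ^ (2 * k))"
    using Suc.hyps by (cases k) (simp_all add: q2q2_fin_Suc)
  have rhs_rec: "T (Suc k) * ?P + 2 * fps_X ^ Suc k * q2q2_fin k
      = ?c * (T k * ?P + 2 * fps_X ^ k * q2q2_fin (k - 1)) - fps_X ^ (2 * k + 1) * ?P"
    unfolding T_Suc[OF Suc.hyps] q2_step powers Y_def[symmetric]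
    by (simp add: algebra_simps power2_eq_square)
  have split: "spt_gf (N + 1) (Suc k) N - (T (Suc k) * ?P + 2 * fps_X ^ Suc k * q2q2_fin k)
        = (spt_gf (N + 1) (k + 1) N - (?c * spt_gf (N + 1) k N - fps_X ^ (2 * k + 1) * ?P))
          + ?c * (spt_gf (N + 1) k N - (T k * ?P + 2 * fps_X ^ k * q2q2_fin (k - 1)))"
    unfolding rhs_rec by (simp add: algebra_simps)
  show ?case
    unfolding diff_Suc_1 split
    using spt_gf_recurrence_mod[OF Suc.hyps] Suc.IH by (intro dvd_add dvd_mult)
qed

section \<open>Passing to the infinite product\<close>

lemma fps_X_power_dvd_diff_nth_eq:
  fixes f g :: "'a::comm_ring_1 fps"
  assumes "fps_X ^ (N + 1) dvd f - g" and "n \<le> N"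
  shows "f $ n = g $ n"
proof -
  obtain h where h: "f - g = fps_X ^ (N + 1) * h"
    using assms(1) by blast
  have "(f - g) $ n = 0"
    unfolding h fps_X_power_mult_nth using assms(2) by simp
  then show ?thesis
    by simp
qed

lemma fps_mult_prod_one_minus_fps_X_power_nth:
  fixes f :: "'a::comm_ring_1 fps"
  assumes "finite C" and "\<forall>j\<in>C. m < j"
  shows "(f * (\<Prod>j\<in>C. 1 - fps_X ^ j)) $ m = f $ m"
  using assms
proof (induction C rule: finite_induct)
  case (insert c C)
  have "f * (\<Prod>j\<in>insert c C. 1 - fps_X ^ j)
        = f * (\<Prod>j\<in>C. 1 - fps_X ^ j) - fps_X ^ c * (f * (\<Prod>j\<in>C. 1 - fps_X ^ j))"
    using insert.hyps by (simp add: algebra_simps)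
  then show ?case
    using insert by (simp add: fps_X_power_mult_nth)
qed simp

lemma prod_one_minus_fps_X_power_nth_eq:
  assumes "finite B" and "A \<subseteq> B" and "\<forall>j\<in>B - A. i < j"
  shows "(\<Prod>j\<in>B. 1 - fps_X ^ j :: 'a::comm_ring_1 fps) $ i = (\<Prod>j\<in>A. 1 - fps_X ^ j :: 'a fps) $ i"
proof -
  have "(\<Prod>j\<in>B. 1 - fps_X ^ j :: 'a fps) = (\<Prod>j\<in>A. 1 - fps_X ^ j) * (\<Prod>j\<in>B - A. 1 - fps_X ^ j)"
    using prod.subset_diff[OF assms(2,1)] by (simp add: mult.commute)
  then show ?thesis
    using assms by (simp add: fps_mult_prod_one_minus_fps_X_power_nth)
qed

lemma qq2_inf_nth:
  assumes "i \<le> N"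
  shows "qq2_inf $ i = opp_parity_prod (N + 1) 0 $ i"
proof -
  define C where "C = {j. j \<le> i \<and> odd j}"
  have odd_image: "(\<lambda>j. 2 * j + 1) ` {..<Suc i} = {j. j \<le> 2 * i + 1 \<and> odd j}"
    by (auto simp: image_iff elim!: oddE)
  have "(\<Prod>j<Suc i. 1 - fps_X ^ (2 * j + 1) :: int fps) = (\<Prod>j\<in>(\<lambda>j. 2 * j + 1) ` {..<Suc i}. 1 - fps_X ^ j)"
    by (subst prod.reindex) (auto simp: inj_on_def)
  also have "\<dots> $ i = (\<Prod>j\<in>C. 1 - fps_X ^ j :: int fps) $ i"
    unfolding odd_image by (rule prod_one_minus_fps_X_power_nth_eq) (auto simp: C_def)
  also have "\<dots> = opp_parity_prod (N + 1) 0 $ i"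
    unfolding opp_parity_prod_def
    by (rule prod_one_minus_fps_X_power_nth_eq[symmetric])
      (use assms in \<open>auto simp: C_def opp_parity_parts_def odd_pos\<close>)
  finally show ?thesis
    unfolding qq2_inf_def by simp
qed

lemma fps_mult_qq2_inf_nth: "(f * qq2_inf) $ n = (f * opp_parity_prod (n + 1) 0) $ n"
  unfolding fps_mult_nth
proof (intro sum.cong refl)
  fix i
  assume "i \<in> {0..n}"
  then show "f $ i * qq2_inf $ (n - i) = f $ i * opp_parity_prod (n + 1) 0 $ (n - i)"
    using qq2_inf_nth[of "n - i" n] by simp
qed

theorem theorem2:
  fixes k :: nat
  assumes "1 \<le> k"
  shows "Abs_fps (\<lambda>n. if 1 \<le> n then sptk'_do k n else 0)
           = T k * qq2_inf + 2 * fps_X ^ k * q2q2_fin (k - 1)"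
proof (rule fps_ext)
  fix n
  have "sptk'_do k 0 = 0"
    using sptk'_do_eq_spt_gf_nth[OF assms, of 0] by (simp add: spt_gf_def)
  then have "Abs_fps (\<lambda>n. if 1 \<le> n then sptk'_do k n else 0) $ n = sptk'_do k n"
    by (cases n) simp_all
  also have "\<dots> = spt_gf (n + 1) k n $ n"
    using sptk'_do_eq_spt_gf_nth[OF assms] .
  also have "\<dots> = (T k * opp_parity_prod (n + 1) 0 + 2 * fps_X ^ k * q2q2_fin (k - 1)) $ n"
    using spt_gf_congruence[OF assms] by (rule fps_X_power_dvd_diff_nth_eq) simp
  also have "\<dots> = (T k * qq2_inf + 2 * fps_X ^ k * q2q2_fin (k - 1)) $ n"
    by (simp add: fps_mult_qq2_inf_nth)
  finally show "Abs_fps (\<lambda>n. if 1 \<le> n then sptk'_do k n else 0) $ n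
                  = (T k * qq2_inf + 2 * fps_X ^ k * q2q2_fin (k - 1)) $ n" .
qed

end
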